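(* Let $\sigma\colon\Gamma\to2^V$ be a quasi-geometric homology triangulation of a simplex, $E$ a face of $\Gamma$ with $|V|-|\sigma(E)|=1$, and $L(\Gamma,E)$ the local face module with respect to a special l.s.o.p. Let $\Delta\subset\mathrm{lk}_\Gamma(E)$ be a subcomplex. Then $$\dim_k\big(L(\Gamma,E)|_\Delta\big)_1\ge|\{v\text{ a vertex of }\Delta:\{v\}\sqcup E\text{ interior}\}|-1.$$
   Context: Fix an infinite field $k$; homology is with coefficients in $k$. A $d$-dimensional simplicial complex $\Gamma$ with trivial reduced homology is a homology ball of dimension $d$ if there is a subcomplex $\partial\Gamma$ such that $\partial\Gamma$ is a homology sphere of dimension $d-1$, $\mathrm{lk}_\Gamma(F)$ is a homology sphere of dimension $d-|F|$ for $F\notin\partial\Gamma$, and $\mathrm{lk}_\Gamma(F)$ is a homology ball of dimension $d-|F|$ for nonempty $F\in\partial\Gamma$; its interior faces are those not in $\partial\Gamma$. A homology triangulation of $2^V$ is a finite simplicial complex $\Gamma$ with $\sigma\colon\Gamma\to2^V$ such that for every nonempty $U\subset V$, $\Gamma_U:=\sigma^{-1}(2^U)$ is a homology ball of dimension $|U|-1$ whose interior faces are exactly $\sigma^{-1}(U)$. $\sigma(F)$ is the carrier; $\sigma(w)=\sigma(\{w\})$. It is quasi-geometric if there is no face $F$ and $U\subset V$ with $\dim\Gamma_U<\dim F$ and $\sigma(w)\subset U$ for all vertices $w\in F$. A face $G$ is interior if $\sigma(G)=V$. $k[\Delta]$ is the face ring (variables $x_w$, $x^F=\prod_{w\in F}x_w$),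 graded by degree; the restriction map $k[\mathrm{lk}_\Gamma(E)]\to k[\Delta]$ sends $x^G$ to $x^G$ if $G\in\Delta$ and $0$ otherwise, and $M|_\Delta:=M\otimes_{k[\mathrm{lk}_\Gamma(E)]}k[\Delta]$. An l.s.o.p. for a finitely generated graded $k$-algebra of Krull dimension $d$ is a sequence of $d$ degree-one elements with finite-dimensional quotient; an l.s.o.p. $\theta_1,\ldots,\theta_d$ of $k[\mathrm{lk}_\Gamma(E)]$ ($d=|V|-|E|$) is special if for each $v\in V\smallsetminus\sigma(E)$ there is an element $\theta_v$ of it supported on vertices $w$ with $v\in\sigma(w)$, distinct for distinct $v$. $L(\Gamma,E)$ is the image of $(x^G:G\in\mathrm{lk}_\Gamma(E),\ G\sqcup E\text{ interior})$ in $k[\mathrm{lk}_\Gamma(E)]/(\theta_1,\ldots,\theta_d)$. *)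

theory Defs
  imports Main "HOL.Vector_Spaces" "HOL-Library.Poly_Mapping" "HOL-Library.Function_Algebras"
begin

definition simplicial_complex :: "'w set set \<Rightarrow> bool" where
  "simplicial_complex D \<longleftrightarrow> finite D \<and> (\<forall>F\<in>D. finite F) \<and> (\<forall>F\<in>D. \<forall>G. G \<subseteq> F \<longrightarrow> G \<in> D)"

definition lk :: "'w set set \<Rightarrow> 'w set \<Rightarrow> 'w set set" where
  "lk D F = {G \<in> D. G \<inter> F = {} \<and> G \<union> F \<in> D}"

definition verts :: "'w set set \<Rightarrow> 'w set" where
  "verts D = {w. {w} \<in> D}"

definition cdim :: "'w set set \<Rightarrow> int" where
  "cdim D = Max ((\<lambda>F. int (card F) - 1) ` D)"

definition fscale :: "'k::field \<Rightarrow> ('a \<Rightarrow> 'k) \<Rightarrow> ('a \<Rightarrow> 'k)" where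
  "fscale c f = (\<lambda>x. c * f x)"

text \<open>Simplicial i-chains (i \<ge> -1), the (-1)-chains being multiples of the empty face.\<close>
definition chains :: "'w set set \<Rightarrow> int \<Rightarrow> ('w set \<Rightarrow> 'k::field) set" where
  "chains D i = {f. \<forall>G. f G \<noteq> 0 \<longrightarrow> G \<in> D \<and> int (card G) = i + 1}"

text \<open>Simplicial boundary, faces oriented by the linear order on vertices.\<close>
definition bd :: "'w::linorder set set \<Rightarrow> ('w set \<Rightarrow> 'k::field) \<Rightarrow> ('w set \<Rightarrow> 'k)" where
  "bd D f = (\<lambda>G. \<Sum>v\<in>{v. v \<notin> G \<and> insert v G \<in> D}.
                 (-1) ^ card {u\<in>G. u < v} * f (insert v G))"

definition rbetti :: "'k::field itself \<Rightarrow> 'w::linorder set set \<Rightarrow> int \<Rightarrow> nat" where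
  "rbetti _ D i =
     vector_space.dim (fscale :: 'k \<Rightarrow> _) {f :: 'w set \<Rightarrow> 'k. f \<in> chains D i \<and> bd D f = 0}
   - vector_space.dim (fscale :: 'k \<Rightarrow> _) (bd D ` (chains D (i + 1) :: ('w set \<Rightarrow> 'k) set))"

definition hsphere :: "'k::field itself \<Rightarrow> 'w::linorder set set \<Rightarrow> int \<Rightarrow> bool" where
  "hsphere K D d \<longleftrightarrow> simplicial_complex D \<and> {} \<in> D \<and>
     (\<forall>F\<in>D. \<forall>i. rbetti K (lk D F) i = (if i = d - int (card F) then 1 else 0))"

text \<open>hball_bd K G B d: G is a homology ball of dimension d with boundary complex B.\<close>
inductive hball_bd :: "'k::field itself \<Rightarrow> 'w::linorder set set \<Rightarrow> 'w set set \<Rightarrow> int \<Rightarrow> bool"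
  for K :: "'k itself" where
  "\<lbrakk> simplicial_complex G; {} \<in> G; cdim G = d; \<forall>i. rbetti K G i = 0;
     B \<subseteq> G; hsphere K B (d - 1);
     \<forall>F\<in>G - B. hsphere K (lk G F) (d - int (card F));
     \<forall>F\<in>B. F \<noteq> {} \<longrightarrow> (\<exists>B'. hball_bd K (lk G F) B' (d - int (card F))) \<rbrakk>
   \<Longrightarrow> hball_bd K G B d"

definition restr :: "'w set set \<Rightarrow> ('w set \<Rightarrow> 'v set) \<Rightarrow> 'v set \<Rightarrow> 'w set set" where
  "restr G \<sigma> U = {F \<in> G. \<sigma> F \<subseteq> U}"

definition htriang :: "'k::field itself \<Rightarrow> 'w::linorder set set \<Rightarrow> ('w set \<Rightarrow> 'v set) \<Rightarrow> 'v set \<Rightarrow> bool" where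
  "htriang K G \<sigma> V \<longleftrightarrow> finite V \<and> simplicial_complex G \<and> (\<forall>F\<in>G. \<sigma> F \<subseteq> V) \<and>
     (\<forall>U. U \<subseteq> V \<longrightarrow> U \<noteq> {} \<longrightarrow>
        (\<exists>B. hball_bd K (restr G \<sigma> U) B (int (card U) - 1) \<and>
             restr G \<sigma> U - B = {F \<in> G. \<sigma> F = U}))"

definition quasi_geometric :: "'w set set \<Rightarrow> ('w set \<Rightarrow> 'v set) \<Rightarrow> 'v set \<Rightarrow> bool" where
  "quasi_geometric G \<sigma> V \<longleftrightarrow>
     \<not> (\<exists>F\<in>G. \<exists>U. U \<subseteq> V \<and> cdim (restr G \<sigma> U) < int (card F) - 1 \<and> (\<forall>w\<in>F. \<sigma> {w} \<subseteq> U))"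

type_synonym ('w, 'k) mpoly = "('w \<Rightarrow>\<^sub>0 nat) \<Rightarrow>\<^sub>0 'k"

definition pscale :: "'k::field \<Rightarrow> ('w, 'k) mpoly \<Rightarrow> ('w, 'k) mpoly" where
  "pscale c p = Poly_Mapping.map (\<lambda>x. c * x) p"

definition xvar :: "'w \<Rightarrow> ('w, 'k::field) mpoly" where
  "xvar w = Poly_Mapping.single (Poly_Mapping.single w 1) 1"

definition xmon :: "'w set \<Rightarrow> ('w, 'k::field) mpoly" where
  "xmon G = (\<Prod>w\<in>G. xvar w)"

definition polyring :: "'w set \<Rightarrow> ('w, 'k::field) mpoly set" where
  "polyring W = {p :: ('w, 'k) mpoly. \<forall>a\<in>Poly_Mapping.keys p. Poly_Mapping.keys a \<subseteq> W}"

text \<open>Stanley--Reisner ideal of D inside k[x_w : w \<in> W]: spanned by the monomials whose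
  support is not a face of D; k[D] = polyring W / SR D W for W = verts D.\<close>
definition SR :: "'w set set \<Rightarrow> 'w set \<Rightarrow> ('w, 'k::field) mpoly set" where
  "SR D W = {p \<in> polyring W. \<forall>a\<in>Poly_Mapping.keys p. Poly_Mapping.keys a \<notin> D}"

definition ideal_gen :: "'a::comm_ring_1 set \<Rightarrow> 'a set \<Rightarrow> 'a set" where
  "ideal_gen R X = {(\<Sum>x\<in>F. c x * x) | c F. finite F \<and> F \<subseteq> X \<and> (\<forall>x\<in>F. c x \<in> R)}"

definition ideal_prod :: "'a::comm_ring_1 set \<Rightarrow> 'a set \<Rightarrow> 'a set \<Rightarrow> 'a set" where
  "ideal_prod R I J = ideal_gen R {a * b | a b. a \<in> I \<and> b \<in> J}"

definition setsum :: "'a::ab_group_add set \<Rightarrow> 'a set \<Rightarrow> 'a set" where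
  "setsum A B = {a + b | a b. a \<in> A \<and> b \<in> B}"

definition homog :: "nat \<Rightarrow> ('w, 'k::field) mpoly \<Rightarrow> bool" where
  "homog n p \<longleftrightarrow> (\<forall>a\<in>Poly_Mapping.keys p. (\<Sum>i\<in>Poly_Mapping.keys a. Poly_Mapping.lookup a i) = n)"

definition degpart :: "('w, 'k::field) mpoly set \<Rightarrow> nat \<Rightarrow> ('w, 'k) mpoly set" where
  "degpart P n = {p \<in> P. homog n p}"

definition pdim :: "('w, 'k::field) mpoly set \<Rightarrow> nat" where
  "pdim P = vector_space.dim pscale P"

text \<open>theta is an l.s.o.p. of polyring W / I of length d: d degree-one elements such that
  the quotient by I + (theta) is a finite-dimensional k-vector space.\<close>
definition is_lsop :: "'w set \<Rightarrow> ('w, 'k::field) mpoly set \<Rightarrow> ('w, 'k) mpoly list \<Rightarrow> nat \<Rightarrow> bool" where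
  "is_lsop W I th d \<longleftrightarrow> length th = d \<and> (\<forall>t\<in>set th. t \<in> degpart (polyring W) 1) \<and>
     (\<exists>B. finite B \<and> B \<subseteq> polyring W \<and>
        (\<forall>p\<in>polyring W. \<exists>q\<in>module.span pscale B.
            p - q \<in> setsum I (ideal_gen (polyring W) (set th))))"

text \<open>l.s.o.p. of k[lk_G(E)] (Krull dimension |V| - |E|).\<close>
definition lsop_lk :: "'w set set \<Rightarrow> 'v set \<Rightarrow> 'w set \<Rightarrow> ('w, 'k::field) mpoly list \<Rightarrow> bool" where
  "lsop_lk G V E th \<longleftrightarrow>
     is_lsop (verts (lk G E)) (SR (lk G E) (verts (lk G E))) th (card V - card E)"

definition special :: "('w set \<Rightarrow> 'v set) \<Rightarrow> 'v set \<Rightarrow> 'w set \<Rightarrow> ('w, 'k::field) mpoly list \<Rightarrow> bool" where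
  "special \<sigma> V E th \<longleftrightarrow> (\<exists>f. inj_on f (V - \<sigma> E) \<and>
     (\<forall>v\<in>V - \<sigma> E. f v < length th \<and>
        (\<forall>a\<in>Poly_Mapping.keys (th ! f v). \<exists>w. a = Poly_Mapping.single w 1 \<and> v \<in> \<sigma> {w})))"

text \<open>With R = polyring W (W = verts(lk E)), N = SR(lk E) + (theta) so that
  k[lk E]/(theta) = R/N, and J the ideal generated by the x^G with G \<sqcup> E interior:
  L(G,E) = (J + N)/N.  The kernel of k[lk E] \<rightarrow> k[D] is the image of SR D W, hence
  L|_D = L \<otimes> k[lk E]/ker = L / ker\<cdot>L = (J + N)/(SR D W \<cdot> J + N).
  loc_restr_dim1 is dim_k of the degree-one component of this graded module.\<close>
definition lfm_N :: "'w set set \<Rightarrow> 'w set \<Rightarrow> ('w, 'k::field) mpoly list \<Rightarrow> ('w, 'k) mpoly set" where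
  "lfm_N G E th = setsum (SR (lk G E) (verts (lk G E))) (ideal_gen (polyring (verts (lk G E))) (set th))"

definition lfm_J :: "'w set set \<Rightarrow> ('w set \<Rightarrow> 'v set) \<Rightarrow> 'v set \<Rightarrow> 'w set \<Rightarrow> ('w, 'k::field) mpoly set" where
  "lfm_J G \<sigma> V E = ideal_gen (polyring (verts (lk G E)))
      {xmon F | F. F \<in> lk G E \<and> \<sigma> (F \<union> E) = V}"

definition loc_restr_dim1 :: "'w set set \<Rightarrow> ('w set \<Rightarrow> 'v set) \<Rightarrow> 'v set \<Rightarrow> 'w set
     \<Rightarrow> ('w, 'k::field) mpoly list \<Rightarrow> 'w set set \<Rightarrow> nat" where
  "loc_restr_dim1 G \<sigma> V E th D =
     pdim (degpart (setsum (lfm_J G \<sigma> V E) (lfm_N G E th)) 1)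
   - pdim (degpart (setsum (ideal_prod (polyring (verts (lk G E))) (SR D (verts (lk G E)))
                              (lfm_J G \<sigma> V E)) (lfm_N G E th)) 1)"

end

theory Submission
  imports Defs "HOL-Computational_Algebra.Polynomial"
begin

text \<open>
  Write \<open>I\<^sub>K\<close> for the Stanley--Reisner ideal of a complex \<open>K\<close>, \<open>L = lk E\<close>, \<open>J\<close> for the
  ideal of the monomials of the interior faces of \<open>L\<close> and \<open>S\<close> for the interior vertices
  of \<open>\<Delta>\<close>. In degree one, \<open>L(\<Gamma>,E)|\<^sub>\<Delta>\<close> is the quotient of the degree-one
  part \<open>A\<close> of \<open>J + I\<^sub>L + (\<theta>)\<close> by the degree-one part \<open>B\<close> of \<open>I\<^sub>\<Delta> J + I\<^sub>L + (\<theta>)\<close>.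
  Both \<open>I\<^sub>\<Delta> J\<close> and \<open>I\<^sub>L\<close> start in degree two, so \<open>B\<close> lies in the span of \<open>\<theta>\<close> and
  \<open>dim B \<le> |V| - |E|\<close>.

  On the other hand \<open>A\<close> contains \<open>\<theta>\<close> and the variables \<open>x\<^sub>v\<close>, \<open>v \<in> S\<close>. As \<open>E\<close> is interior in
  the homology ball \<open>\<Gamma>\<^bsub>\<sigma>(E)\<^esub>\<close>, its link there is a homology sphere and has a face \<open>F\<close>
  with \<open>|F| = |V| - |E| - 1\<close>, none of whose vertices is interior. An l.s.o.p. has no
  nontrivial common zero supported on a face, so the restrictions of \<open>\<theta>\<close> to \<open>F\<close> span all
  linear forms in the variables of \<open>F\<close>; counting dimensions gives \<open>dim A \<ge> |S| + |F|\<close>, hence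
  \<open>dim A - dim B \<ge> |S| - 1\<close>.
\<close>

section \<open>Linear algebra\<close>

context vector_space
begin

lemma dim_le_dim_if_subset_span:
  assumes "V \<subseteq> span A" and "A \<subseteq> span F" and "finite F"
  shows "dim V \<le> dim A"
proof -
  obtain B where B: "B \<subseteq> A" "independent B" "A \<subseteq> span B" "card B = dim A"
    by (rule basis_exists)
  have "finite B"
    using independent_span_bound[OF assms(3) B(2)] B(1) assms(2) by blast
  moreover have "V \<subseteq> span B"
    using assms(1) span_mono[OF B(3)] by (simp only: span_span)
  ultimately have "dim V \<le> card B"
    by (intro dim_le_card)
  then show ?thesis
    using B(4) by linarith
qed

lemma dim_Un_le_dim_add_card:
  assumes "finite P" and "finite Q"
  shows "dim (P \<union> Q) \<le> dim P + card Q"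
proof -
  obtain B where B: "B \<subseteq> P" "P \<subseteq> span B" "card B = dim P"
    by (rule basis_exists)
  have "P \<union> Q \<subseteq> span (B \<union> Q)"
    using B(2) span_mono[of B "B \<union> Q"] span_superset[of "B \<union> Q"] by blast
  then have "dim (P \<union> Q) \<le> card (B \<union> Q)"
    using B(1) assms by (intro dim_le_card) (auto intro: finite_subset)
  also have "\<dots> \<le> card B + card Q"
    by (rule card_Un_le)
  finally show ?thesis
    using B(3) by linarith
qed

lemma exists_separating_functional:
  assumes "y \<notin> span S"
  obtains \<phi> :: "'b \<Rightarrow> 'a" where "Vector_Spaces.linear scale (*) \<phi>" and "\<phi> y = 1"
    and "\<And>x. x \<in> span S \<Longrightarrow> \<phi> x = 0"
proof -
  interpret kv: vector_space "(*) :: 'a \<Rightarrow> 'a \<Rightarrow> 'a"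
    by unfold_locales (simp_all add: algebra_simps)
  interpret vector_space_pair scale "(*) :: 'a \<Rightarrow> 'a \<Rightarrow> 'a" ..
  obtain B where B: "B \<subseteq> S" "independent B" "S \<subseteq> span B"
    by (rule maximal_independent_subset)
  have "span B = span S"
    using B(1,3) by (metis span_mono span_span subset_antisym)
  then have yB: "y \<notin> span B"
    using assms by simp
  then have indep: "independent (insert y B)"
    using B(2) independent_insertI by blast
  define \<phi> where "\<phi> = construct (insert y B) (\<lambda>x. if x = y then 1 else 0)"
  have lin: "Vector_Spaces.linear scale (*) \<phi>"
    unfolding \<phi>_def using indep by (rule linear_construct)
  then interpret \<phi>: Vector_Spaces.linear scale "(*) :: 'a \<Rightarrow> 'a \<Rightarrow> 'a" \<phi> .
  have "\<phi> y = 1"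
    unfolding \<phi>_def using indep by (simp add: construct_basis)
  moreover have "\<phi> x = 0" if "x \<in> B" for x
  proof -
    have "x \<noteq> y"
      using span_base[OF that] yB by blast
    then show ?thesis
      unfolding \<phi>_def using that by (simp add: construct_basis[OF indep])
  qed
  then have "\<phi> x = 0" if "x \<in> span S" for x
    using \<phi>.eq_0_on_span[of B x] that \<open>span B = span S\<close> by simp
  ultimately show ?thesis
    by (rule that[OF lin])
qed

end

section \<open>Polynomials\<close>

lemma lookup_pscale [simp]: "Poly_Mapping.lookup (pscale c p) m = c * Poly_Mapping.lookup p m"
  unfolding pscale_def by transfer (auto simp: when_def)

lemma pscale_conv_mult: "pscale c p = Poly_Mapping.single 0 c * p"
  unfolding pscale_def by (rule mult_map_scale_conv_mult)

interpretation pv: vector_space "pscale :: 'k::field \<Rightarrow> ('w, 'k) mpoly \<Rightarrow> _"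
  by unfold_locales (auto simp: pscale_conv_mult algebra_simps single_add mult_single)

lemma keys_pscale: "Poly_Mapping.keys (pscale c p) \<subseteq> Poly_Mapping.keys p"
  by (auto simp: in_keys_iff)

lemma sum_single_lookup:
  "(\<Sum>m\<in>Poly_Mapping.keys p. Poly_Mapping.single m (Poly_Mapping.lookup p m)) = p"
  by (rule poly_mapping_eqI) (simp add: lookup_sum lookup_single when_def in_keys_iff)

definition monom_deg :: "('w \<Rightarrow>\<^sub>0 nat) \<Rightarrow> nat" where
  "monom_deg m = (\<Sum>w\<in>Poly_Mapping.keys m. Poly_Mapping.lookup m w)"

lemma homog_iff_monom_deg: "homog n p \<longleftrightarrow> (\<forall>m\<in>Poly_Mapping.keys p. monom_deg m = n)"
  by (simp add: homog_def monom_deg_def)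

lemma monom_deg_add: "monom_deg (m + n) = monom_deg m + monom_deg n"
  unfolding monom_deg_def by (rule setsum_keys_plus_distrib[where f = "\<lambda>k v. v", simplified])

lemma monom_deg_single [simp]: "monom_deg (Poly_Mapping.single w n) = n"
  by (simp add: monom_deg_def)

lemma card_keys_le_monom_deg: "card (Poly_Mapping.keys m) \<le> monom_deg m"
proof -
  have "card (Poly_Mapping.keys m) = (\<Sum>w\<in>Poly_Mapping.keys m. 1)"
    by simp
  also have "\<dots> \<le> monom_deg m"
    unfolding monom_deg_def by (rule sum_mono) (simp add: in_keys_iff Suc_le_eq)
  finally show ?thesis .
qed

lemma monom_deg_zero [simp]: "monom_deg 0 = 0"
  by (simp add: monom_deg_def)

lemma monom_deg_eq_0_iff [simp]: "monom_deg m = 0 \<longleftrightarrow> m = 0"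
  by (auto simp: monom_deg_def in_keys_iff intro!: poly_mapping_eqI)

lemma monom_deg_eq_1D:
  assumes "monom_deg m = 1"
  obtains w where "m = Poly_Mapping.single w 1"
proof -
  have "Poly_Mapping.keys m \<noteq> {}" and "card (Poly_Mapping.keys m) \<le> 1"
    using assms card_keys_le_monom_deg[of m] by auto
  then obtain w where keys: "Poly_Mapping.keys m = {w}"
    by (metis card_0_eq card_1_singletonE finite_keys le_neq_implies_less less_one)
  then have "Poly_Mapping.lookup m w = 1"
    using assms by (simp add: monom_deg_def)
  then have "m = Poly_Mapping.single w 1"
    using keys by (intro poly_mapping_eqI) (auto simp: lookup_single when_def in_keys_iff)
  then show thesis
    by (rule that)
qed

definition mindeg_ge :: "nat \<Rightarrow> ('w, 'k::field) mpoly \<Rightarrow> bool" where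
  "mindeg_ge k p \<longleftrightarrow> (\<forall>m\<in>Poly_Mapping.keys p. k \<le> monom_deg m)"

lemma mindeg_ge_0 [simp]: "mindeg_ge 0 p"
  by (simp add: mindeg_ge_def)

lemma mindeg_ge_zero [simp]: "mindeg_ge k 0"
  by (simp add: mindeg_ge_def)

lemma mindeg_ge_add: "mindeg_ge k p \<Longrightarrow> mindeg_ge k q \<Longrightarrow> mindeg_ge k (p + q)"
  unfolding mindeg_ge_def using keys_add[of p q] by blast

lemma mindeg_ge_sum: "(\<And>i. i \<in> S \<Longrightarrow> mindeg_ge k (f i)) \<Longrightarrow> mindeg_ge k (sum f S)"
  by (induction S rule: infinite_finite_induct) (simp_all add: mindeg_ge_add)

lemma mindeg_ge_mult:
  assumes "mindeg_ge k p" and "mindeg_ge l q"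
  shows "mindeg_ge (k + l) (p * q)"
  unfolding mindeg_ge_def
proof
  fix m assume "m \<in> Poly_Mapping.keys (p * q)"
  then obtain a b where "m = a + b" "a \<in> Poly_Mapping.keys p" "b \<in> Poly_Mapping.keys q"
    using keys_mult[of p q] by blast
  then show "k + l \<le> monom_deg m"
    using assms by (simp add: mindeg_ge_def monom_deg_add add_mono)
qed

lemma mindeg_ge_mono: "mindeg_ge k p \<Longrightarrow> j \<le> k \<Longrightarrow> mindeg_ge j p"
  by (auto simp: mindeg_ge_def)

lemma homog_imp_mindeg_ge: "homog n p \<Longrightarrow> mindeg_ge n p"
  by (simp add: homog_iff_monom_deg mindeg_ge_def)

lemma mindeg_ge_1_iff: "mindeg_ge 1 p \<longleftrightarrow> Poly_Mapping.lookup p 0 = 0"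
  unfolding mindeg_ge_def by (metis in_keys_iff less_one monom_deg_eq_0_iff not_le)

definition homog_part :: "nat \<Rightarrow> ('w, 'k::field) mpoly \<Rightarrow> ('w, 'k) mpoly" where
  "homog_part n p = Abs_poly_mapping (\<lambda>m. if monom_deg m = n then Poly_Mapping.lookup p m else 0)"

lemma lookup_homog_part:
  "Poly_Mapping.lookup (homog_part n p) m = (if monom_deg m = n then Poly_Mapping.lookup p m else 0)"
proof -
  have "finite {m. (if monom_deg m = n then Poly_Mapping.lookup p m else 0) \<noteq> 0}"
    by (rule finite_subset[of _ "Poly_Mapping.keys p"]) (auto simp: in_keys_iff)
  then show ?thesis
    by (simp add: homog_part_def)
qed

lemma homog_part_zero [simp]: "homog_part n 0 = 0"
  by (rule poly_mapping_eqI) (simp add: lookup_homog_part)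

lemma homog_part_add: "homog_part n (p + q) = homog_part n p + homog_part n q"
  by (rule poly_mapping_eqI) (simp add: lookup_homog_part lookup_add)

lemma homog_part_sum: "homog_part n (sum f S) = (\<Sum>i\<in>S. homog_part n (f i))"
  by (induction S rule: infinite_finite_induct)
    (simp_all add: homog_part_add)

lemma homog_part_eq_self: "homog n p \<Longrightarrow> homog_part n p = p"
  by (rule poly_mapping_eqI) (auto simp: lookup_homog_part homog_iff_monom_deg in_keys_iff)

lemma homog_part_eq_0:
  assumes "mindeg_ge (Suc n) p"
  shows "homog_part n p = 0"
proof (rule poly_mapping_eqI)
  fix m
  have "Poly_Mapping.lookup p m = 0" if "monom_deg m = n"
    using assms that unfolding mindeg_ge_def by (metis Suc_n_not_le_n in_keys_iff)
  then show "Poly_Mapping.lookup (homog_part n p) m = Poly_Mapping.lookup 0 m"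
    by (simp add: lookup_homog_part)
qed

lemma homog_pscale: "homog n p \<Longrightarrow> homog n (pscale c p)"
  unfolding homog_def using keys_pscale by blast

lemma homog_part_mult_homog:
  assumes "homog n t"
  shows "homog_part n (c * t) = pscale (Poly_Mapping.lookup c 0) t"
proof -
  define r where "r = c - Poly_Mapping.single 0 (Poly_Mapping.lookup c 0)"
  have "mindeg_ge 1 r"
    unfolding mindeg_ge_1_iff by (simp add: r_def lookup_minus)
  then have "mindeg_ge (Suc n) (r * t)"
    using mindeg_ge_mult homog_imp_mindeg_ge[OF assms] by fastforce
  moreover have "c * t = pscale (Poly_Mapping.lookup c 0) t + r * t"
    by (simp add: r_def pscale_conv_mult algebra_simps)
  ultimately show ?thesis
    using assms by (simp add: homog_part_add homog_part_eq_0 homog_part_eq_self homog_pscale)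
qed

lemma polyring_zero [simp]: "0 \<in> polyring W"
  by (simp add: polyring_def)

lemma polyring_one [simp]: "1 \<in> polyring W"
  by (simp add: polyring_def)

lemma polyring_add: "p \<in> polyring W \<Longrightarrow> q \<in> polyring W \<Longrightarrow> p + q \<in> polyring W"
  unfolding polyring_def using keys_add[of p q] by blast

lemma polyring_mult:
  assumes "p \<in> polyring W" and "q \<in> polyring W"
  shows "p * q \<in> polyring W"
  unfolding polyring_def
proof (intro CollectI ballI)
  fix m assume "m \<in> Poly_Mapping.keys (p * q)"
  then obtain a b where "m = a + b" "a \<in> Poly_Mapping.keys p" "b \<in> Poly_Mapping.keys q"
    using keys_mult[of p q] by blast
  then show "Poly_Mapping.keys m \<subseteq> W"
    using assms keys_add[of a b] unfolding polyring_def by blast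
qed

lemma polyring_sum: "(\<And>i. i \<in> S \<Longrightarrow> f i \<in> polyring W) \<Longrightarrow> sum f S \<in> polyring W"
  by (induction S rule: infinite_finite_induct) (simp_all add: polyring_add)

lemma polyring_prod: "(\<And>i. i \<in> S \<Longrightarrow> f i \<in> polyring W) \<Longrightarrow> prod f S \<in> polyring W"
  by (induction S rule: infinite_finite_induct) (simp_all add: polyring_mult)

lemma polyring_xvar: "w \<in> W \<Longrightarrow> xvar w \<in> polyring W"
  by (simp add: polyring_def xvar_def)

lemma xmon_in_polyring: "F \<subseteq> W \<Longrightarrow> xmon F \<in> polyring W"
  unfolding xmon_def by (intro polyring_prod polyring_xvar) auto

lemma single_eq_single_iff:
  "Poly_Mapping.single u a = Poly_Mapping.single v a \<longleftrightarrow> u = v \<or> a = 0"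
  by (metis lookup_single_eq lookup_single_not_eq single_zero)

lemma xvar_power: "xvar w ^ n = Poly_Mapping.single (Poly_Mapping.single w n) 1"
  by (induction n) (simp_all add: xvar_def mult_single flip: single_add)

lemma xmon_eq_single:
  "finite F \<Longrightarrow> xmon F = Poly_Mapping.single (\<Sum>w\<in>F. Poly_Mapping.single w 1) 1"
  unfolding xmon_def by (induction F rule: finite_induct) (simp_all add: xvar_def mult_single)

lemma homog_xmon:
  assumes "finite F"
  shows "homog (card F) (xmon F)"
proof -
  have "monom_deg (\<Sum>w\<in>F. Poly_Mapping.single w (1::nat)) = card F"
    using assms by (induction F rule: finite_induct) (simp_all add: monom_deg_add)
  then show ?thesis
    using assms by (simp add: xmon_eq_single homog_iff_monom_deg)
qed

lemma xmon_singleton: "xmon {w} = xvar w"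
  by (simp add: xmon_def)

lemma homog_xvar: "homog 1 (xvar w)"
  by (simp add: homog_def xvar_def)

definition lin_coeff :: "('w, 'k::field) mpoly \<Rightarrow> 'w \<Rightarrow> 'k" where
  "lin_coeff t u = Poly_Mapping.lookup t (Poly_Mapping.single u 1)"

lemma lin_coeff_xvar: "lin_coeff (xvar v) u = (if u = v then 1 else 0)"
  by (auto simp: lin_coeff_def xvar_def lookup_single when_def single_eq_single_iff)

lemma pscale_xvar: "pscale c (xvar u) = Poly_Mapping.single (Poly_Mapping.single u 1) c"
  by (rule poly_mapping_eqI) (simp add: xvar_def lookup_single when_def)

lemma keys_homog1_subset:
  assumes "t \<in> polyring W" and "homog 1 t"
  shows "Poly_Mapping.keys t \<subseteq> (\<lambda>u. Poly_Mapping.single u 1) ` W"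
proof
  fix m assume m: "m \<in> Poly_Mapping.keys t"
  then obtain u where u: "m = Poly_Mapping.single u 1"
    using assms(2) monom_deg_eq_1D by (auto simp: homog_iff_monom_deg)
  then have "u \<in> W"
    using assms(1) m by (auto simp: polyring_def)
  then show "m \<in> (\<lambda>u. Poly_Mapping.single u 1) ` W"
    using u by blast
qed

lemma homog1_eq_sum_lin_coeff:
  assumes "finite W" and "t \<in> polyring W" and "homog 1 t"
  shows "(\<Sum>u\<in>W. pscale (lin_coeff t u) (xvar u)) = t"
proof -
  have inj: "inj_on (\<lambda>u. Poly_Mapping.single u (1::nat)) W"
    by (simp add: inj_on_def single_eq_single_iff)
  have "(\<Sum>u\<in>W. pscale (lin_coeff t u) (xvar u))
      = (\<Sum>m\<in>(\<lambda>u. Poly_Mapping.single u 1) ` W. Poly_Mapping.single m (Poly_Mapping.lookup t m))"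
    by (rule sum.reindex_cong[OF inj refl, symmetric]) (simp add: lin_coeff_def pscale_xvar)
  also have "\<dots> = (\<Sum>m\<in>Poly_Mapping.keys t. Poly_Mapping.single m (Poly_Mapping.lookup t m))"
    using assms keys_homog1_subset by (intro sum.mono_neutral_right) (auto simp: in_keys_iff)
  finally show ?thesis
    by (simp only: sum_single_lookup)
qed

lemma homog1_in_span_xvar:
  assumes "finite W" and "t \<in> polyring W" and "homog 1 t"
  shows "t \<in> pv.span (xvar ` W)"
proof -
  have "(\<Sum>u\<in>W. pscale (lin_coeff t u) (xvar u)) \<in> pv.span (xvar ` W)"
    by (intro pv.span_sum pv.span_scale pv.span_base) auto
  then show ?thesis
    by (simp only: homog1_eq_sum_lin_coeff[OF assms])
qed

lemma inj_xvar: "inj (xvar :: 'w \<Rightarrow> ('w, 'k::field) mpoly)"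
  by (rule injI) (metis lin_coeff_xvar one_neq_zero)

lemma independent_xvar:
  assumes "finite W"
  shows "pv.independent (xvar ` W :: ('w, 'k::field) mpoly set)"
proof (rule pv.independent_if_scalars_zero)
  show "finite (xvar ` W :: ('w, 'k) mpoly set)"
    using assms by simp
  fix f :: "('w, 'k) mpoly \<Rightarrow> 'k" and x :: "('w, 'k) mpoly"
  assume eq: "(\<Sum>x\<in>xvar ` W. pscale (f x) x) = 0" and "x \<in> xvar ` W"
  then obtain u where u: "u \<in> W" "x = xvar u"
    by blast
  have "(\<Sum>x\<in>xvar ` W. pscale (f x) x) = (\<Sum>v\<in>W. pscale (f (xvar v)) (xvar v))"
    by (rule sum.reindex_cong[OF inj_on_subset[OF inj_xvar subset_UNIV] refl refl])
  then have "0 = lin_coeff (\<Sum>v\<in>W. pscale (f (xvar v)) (xvar v)) u"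
    by (simp add: eq lin_coeff_def)
  also have "\<dots> = (\<Sum>v\<in>W. f (xvar v) * lin_coeff (xvar v) u)"
    by (simp add: lin_coeff_def lookup_sum)
  also have "\<dots> = f x"
    using u assms by (simp add: lin_coeff_xvar if_distrib[of "times _"] eq_commute[of u] cong: if_cong)
  finally show "f x = 0"
    by simp
qed

lemma dim_xvar_image:
  assumes "finite W"
  shows "pv.dim (xvar ` W :: ('w, 'k::field) mpoly set) = card W"
proof -
  have "card (xvar ` W :: ('w, 'k) mpoly set) = card W"
    using inj_xvar by (rule card_image[OF inj_on_subset]) simp
  then show ?thesis
    using pv.dim_eq_card_independent[OF independent_xvar[OF assms, where 'k='k]] by simp
qed

section \<open>Evaluation along a line and l.s.o.p.s\<close>

definition eval_monom :: "('w \<Rightarrow> 'k::field) \<Rightarrow> ('w \<Rightarrow>\<^sub>0 nat) \<Rightarrow> 'k poly" where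
  "eval_monom a m = monom (\<Prod>w\<in>Poly_Mapping.keys m. a w ^ Poly_Mapping.lookup m w) (monom_deg m)"

text \<open>\<open>eval_line a p\<close> is the univariate polynomial \<open>p(t \<cdot> a)\<close> in \<open>t\<close>.\<close>
definition eval_line :: "('w \<Rightarrow> 'k::field) \<Rightarrow> ('w, 'k) mpoly \<Rightarrow> 'k poly" where
  "eval_line a p = (\<Sum>m\<in>Poly_Mapping.keys p. smult (Poly_Mapping.lookup p m) (eval_monom a m))"

lemma prod_keys_power_eq:
  assumes "finite T" and "Poly_Mapping.keys m \<subseteq> T"
  shows "(\<Prod>w\<in>Poly_Mapping.keys m. a w ^ Poly_Mapping.lookup m w) = (\<Prod>w\<in>T. a w ^ Poly_Mapping.lookup m w)"
  using assms by (intro prod.mono_neutral_left) (auto simp: in_keys_iff)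

lemma eval_monom_add: "eval_monom a (m + n) = eval_monom a m * eval_monom a n"
proof -
  let ?T = "Poly_Mapping.keys m \<union> Poly_Mapping.keys n"
  have T: "finite ?T"
    by simp
  have "(\<Prod>w\<in>Poly_Mapping.keys (m + n). a w ^ Poly_Mapping.lookup (m + n) w)
      = (\<Prod>w\<in>?T. a w ^ Poly_Mapping.lookup (m + n) w)"
    by (rule prod_keys_power_eq[OF T keys_add])
  also have "\<dots> = (\<Prod>w\<in>?T. a w ^ Poly_Mapping.lookup m w) * (\<Prod>w\<in>?T. a w ^ Poly_Mapping.lookup n w)"
    by (simp add: lookup_add power_add prod.distrib)
  also have "\<dots> = (\<Prod>w\<in>Poly_Mapping.keys m. a w ^ Poly_Mapping.lookup m w)
      * (\<Prod>w\<in>Poly_Mapping.keys n. a w ^ Poly_Mapping.lookup n w)"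
    using prod_keys_power_eq[OF T, of m a] prod_keys_power_eq[OF T, of n a] by simp
  finally show ?thesis
    by (simp add: eval_monom_def mult_monom monom_deg_add)
qed

lemma eval_monom_single: "eval_monom a (Poly_Mapping.single w n) = monom (a w ^ n) n"
  by (cases "n = 0") (simp_all add: eval_monom_def monom_0 one_pCons)

lemma eval_line_zero [simp]: "eval_line a 0 = 0"
  by (simp add: eval_line_def)

lemma eval_line_add: "eval_line a (p + q) = eval_line a p + eval_line a q"
  unfolding eval_line_def
  by (rule setsum_keys_plus_distrib[where f = "\<lambda>m c. smult c (eval_monom a m)"])
    (simp_all add: smult_add_left)

lemma eval_line_single: "eval_line a (Poly_Mapping.single m c) = smult c (eval_monom a m)"
  by (cases "c = 0") (simp_all add: eval_line_def)

lemma eval_line_sum: "eval_line a (sum f S) = (\<Sum>i\<in>S. eval_line a (f i))"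
  by (induction S rule: infinite_finite_induct) (simp_all add: eval_line_add)

lemma eval_line_diff: "eval_line a (p - q) = eval_line a p - eval_line a q"
  using eval_line_add[of a "p - q" q] by simp

lemma eval_line_mult: "eval_line a (p * q) = eval_line a p * eval_line a q"
proof -
  let ?P = "Poly_Mapping.keys p" and ?Q = "Poly_Mapping.keys q"
  have "p * q = (\<Sum>m\<in>?P. Poly_Mapping.single m (Poly_Mapping.lookup p m))
      * (\<Sum>n\<in>?Q. Poly_Mapping.single n (Poly_Mapping.lookup q n))"
    by (simp only: sum_single_lookup)
  also have "\<dots> = (\<Sum>m\<in>?P. \<Sum>n\<in>?Q.
      Poly_Mapping.single (m + n) (Poly_Mapping.lookup p m * Poly_Mapping.lookup q n))"
    by (simp add: sum_product mult_single)
  finally have "eval_line a (p * q) = (\<Sum>m\<in>?P. \<Sum>n\<in>?Q.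
      smult (Poly_Mapping.lookup p m) (eval_monom a m) * smult (Poly_Mapping.lookup q n) (eval_monom a n))"
    by (simp add: eval_line_sum eval_line_single eval_monom_add mult.commute mult.left_commute)
  also have "\<dots> = eval_line a p * eval_line a q"
    by (simp add: eval_line_def sum_product)
  finally show ?thesis .
qed

lemma eval_line_pscale: "eval_line a (pscale c p) = smult c (eval_line a p)"
  by (simp add: pscale_conv_mult eval_line_mult eval_line_single eval_monom_def)

lemma eval_line_xvar_power: "eval_line a (xvar w ^ n) = monom (a w ^ n) n"
  by (simp add: xvar_power eval_line_single eval_monom_single)

lemma eval_line_homog1:
  assumes "finite W" and "t \<in> polyring W" and "homog 1 t"
  shows "eval_line a t = monom (\<Sum>u\<in>W. lin_coeff t u * a u) 1"
proof -
  have "eval_line a t = (\<Sum>u\<in>W. eval_line a (pscale (lin_coeff t u) (xvar u)))"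
    by (subst homog1_eq_sum_lin_coeff[OF assms, symmetric]) (rule eval_line_sum)
  also have "\<dots> = monom (\<Sum>u\<in>W. lin_coeff t u * a u) 1"
    using eval_line_xvar_power[of a _ 1]
    by (simp add: eval_line_pscale smult_monom monom_sum)
  finally show ?thesis .
qed

lemma eval_line_SR_eq_0:
  assumes "\<And>u. u \<notin> F \<Longrightarrow> a u = 0" and "\<And>H. H \<subseteq> F \<Longrightarrow> H \<in> L"
    and "s \<in> SR L W"
  shows "eval_line a s = 0"
  unfolding eval_line_def
proof (intro sum.neutral ballI)
  fix m assume "m \<in> Poly_Mapping.keys s"
  then have "\<not> Poly_Mapping.keys m \<subseteq> F"
    using assms(2,3) by (auto simp: SR_def)
  then obtain u where u: "u \<in> Poly_Mapping.keys m" "u \<notin> F"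
    by blast
  then have "(\<Prod>w\<in>Poly_Mapping.keys m. a w ^ Poly_Mapping.lookup m w) = 0"
    using assms(1) by (intro prod_zero bexI[of _ u]) (auto simp: in_keys_iff)
  then show "smult (Poly_Mapping.lookup s m) (eval_monom a m) = 0"
    by (simp add: eval_monom_def)
qed

lemma eval_line_ideal_gen_eq_0:
  assumes "\<And>x. x \<in> X \<Longrightarrow> eval_line a x = 0" and "p \<in> ideal_gen R X"
  shows "eval_line a p = 0"
proof -
  obtain c F where "p = (\<Sum>x\<in>F. c x * x)" and "finite F" and "F \<subseteq> X"
    and "\<forall>x\<in>F. c x \<in> R"
    using assms(2) unfolding ideal_gen_def by blast
  then have "eval_line a p = (\<Sum>x\<in>F. eval_line a (c x) * eval_line a x)"
    by (simp add: eval_line_sum eval_line_mult)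
  also have "\<dots> = 0"
    using \<open>F \<subseteq> X\<close> assms(1) by (intro sum.neutral) auto
  finally show ?thesis .
qed

text \<open>Evaluation along the line through \<open>a\<close> kills \<open>I + (\<theta>)\<close>, so it would send the power
  \<open>x\<^sub>w\<^bsup>M+1\<^esup>\<close> and its reduction to the finite span \<open>B\<close> from the definition of an l.s.o.p.
  to the same polynomial in \<open>t\<close>, of degree \<open>M + 1\<close> and at most \<open>M\<close> respectively.\<close>
lemma is_lsop_no_common_zero:
  assumes lsop: "is_lsop W I th d"
    and kill_I: "\<And>p. p \<in> I \<Longrightarrow> eval_line a p = 0"
    and kill_th: "\<And>t. t \<in> set th \<Longrightarrow> eval_line a t = 0"
    and "w \<in> W"
  shows "a w = 0"
proof (rule ccontr)
  assume "a w \<noteq> 0"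
  obtain B where "finite B" and "B \<subseteq> polyring W"
    and red: "\<forall>p\<in>polyring W. \<exists>q\<in>pv.span B. p - q \<in> setsum I (ideal_gen (polyring W) (set th))"
    using lsop unfolding is_lsop_def by blast
  define M where "M = Max (insert 0 ((\<lambda>b. degree (eval_line a b)) ` B))"
  have deg_B: "degree (eval_line a b) \<le> M" if "b \<in> B" for b
    unfolding M_def using \<open>finite B\<close> that by (intro Max_ge) auto
  have deg_span: "degree (eval_line a q) \<le> M" if "q \<in> pv.span B" for q
    using that
  proof (induction rule: pv.span_induct_alt)
    case (step c b q)
    then have "degree (smult c (eval_line a b)) \<le> M"
      using deg_B order.trans[OF degree_smult_le] by blast
    then show ?case
      using step.IH by (simp add: eval_line_add eval_line_pscale degree_add_le)
  qed simp
  have "xvar w ^ Suc M \<in> polyring W"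
    using \<open>w \<in> W\<close> by (induction M) (simp_all add: polyring_mult polyring_xvar)
  then obtain q where "q \<in> pv.span B"
    and "xvar w ^ Suc M - q \<in> setsum I (ideal_gen (polyring W) (set th))"
    using red by blast
  then obtain i c where "xvar w ^ Suc M - q = i + c"
    and "i \<in> I" and "c \<in> ideal_gen (polyring W) (set th)"
    unfolding setsum_def by blast
  then have "eval_line a (xvar w ^ Suc M - q) = 0"
    using kill_I eval_line_ideal_gen_eq_0[OF kill_th] by (simp add: eval_line_add)
  then have "eval_line a q = monom (a w ^ Suc M) (Suc M)"
    by (metis eval_line_diff eval_line_xvar_power eq_iff_diff_eq_0)
  moreover have "degree (monom (a w ^ Suc M) (Suc M)) = Suc M"
    using \<open>a w \<noteq> 0\<close> by (simp add: degree_monom_eq)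
  ultimately show False
    using deg_span[OF \<open>q \<in> pv.span B\<close>] by simp
qed

lemma is_lsop_homog1:
  assumes "is_lsop W I th d" and "t \<in> set th"
  shows "t \<in> polyring W" and "homog 1 t"
  using assms by (auto simp: is_lsop_def degpart_def)

definition restrict_lin :: "'w set \<Rightarrow> ('w, 'k::field) mpoly \<Rightarrow> ('w, 'k) mpoly" where
  "restrict_lin F t = (\<Sum>u\<in>F. pscale (lin_coeff t u) (xvar u))"

text \<open>Otherwise a linear functional vanishing on the restricted forms, read as a point
  supported on the face \<open>F\<close>, would be a nontrivial common zero of \<open>SR L W\<close> and \<open>\<theta>\<close>.\<close>
lemma xvar_in_span_restrict_lin:
  assumes lsop: "is_lsop W (SR L W) th d" and face: "\<And>H. H \<subseteq> F \<Longrightarrow> H \<in> L"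
    and "F \<subseteq> W" and "finite W" and "w \<in> F"
  shows "xvar w \<in> pv.span (restrict_lin F ` set th)"
proof (rule ccontr)
  assume "xvar w \<notin> pv.span (restrict_lin F ` set th)"
  then obtain \<phi> where lin: "Vector_Spaces.linear pscale (*) \<phi>" and "\<phi> (xvar w) = 1"
    and \<phi>_0: "\<And>x. x \<in> pv.span (restrict_lin F ` set th) \<Longrightarrow> \<phi> x = 0"
    by (rule pv.exists_separating_functional) blast
  interpret \<phi>: Vector_Spaces.linear pscale "(*)" \<phi>
    by (rule lin)
  define a where "a u = (if u \<in> F then \<phi> (xvar u) else 0)" for u
  have "eval_line a t = 0" if t: "t \<in> set th" for t
  proof -
    have "(\<Sum>u\<in>W. lin_coeff t u * a u) = (\<Sum>u\<in>F. lin_coeff t u * \<phi> (xvar u))"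
      using \<open>F \<subseteq> W\<close> \<open>finite W\<close> by (intro sum.mono_neutral_cong_right) (auto simp: a_def)
    also have "\<dots> = \<phi> (restrict_lin F t)"
      by (simp add: restrict_lin_def \<phi>.sum \<phi>.scale)
    also have "\<dots> = 0"
      using t by (intro \<phi>_0 pv.span_base) auto
    finally show ?thesis
      using eval_line_homog1[OF \<open>finite W\<close> is_lsop_homog1[OF lsop t]] by simp
  qed
  moreover have "eval_line a s = 0" if "s \<in> SR L W" for s
    using face that by (intro eval_line_SR_eq_0[of F a]) (auto simp: a_def)
  ultimately have "a w = 0"
    using is_lsop_no_common_zero[OF lsop] \<open>F \<subseteq> W\<close> \<open>w \<in> F\<close> by blast
  then show False
    using \<open>\<phi> (xvar w) = 1\<close> \<open>w \<in> F\<close> by (simp add: a_def)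
qed

lemma card_add_card_face_le_dim:
  fixes th :: "('w, 'k::field) mpoly list"
  assumes lsop: "is_lsop W (SR L W) th d" and face: "\<And>H. H \<subseteq> F \<Longrightarrow> H \<in> L"
    and "F \<subseteq> W" and "finite W" and "S \<subseteq> W" and "S \<inter> F = {}"
  shows "card S + card F \<le> pv.dim (xvar ` S \<union> set th)"
proof -
  define R where "R = W - F - S"
  define P where "P = (xvar ` S \<union> set th) \<union> xvar ` R"
  have "finite R" and "finite S"
    using \<open>finite W\<close> \<open>S \<subseteq> W\<close> by (auto simp: R_def intro: finite_subset)
  have P: "x \<in> pv.span P" if "x \<in> P" for x
    using that by (rule pv.span_base)
  have outside: "xvar u \<in> pv.span P" if "u \<in> W - F" for u
    using that P by (auto simp: P_def R_def)
  have "restrict_lin F t \<in> pv.span P" if t: "t \<in> set th" for t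
  proof -
    have "t = (\<Sum>u\<in>W. pscale (lin_coeff t u) (xvar u))"
      using homog1_eq_sum_lin_coeff[OF \<open>finite W\<close> is_lsop_homog1[OF lsop t]] by simp
    also have "\<dots> = (\<Sum>u\<in>W - F. pscale (lin_coeff t u) (xvar u)) + restrict_lin F t"
      unfolding restrict_lin_def by (rule sum.subset_diff[OF \<open>F \<subseteq> W\<close> \<open>finite W\<close>])
    finally have "restrict_lin F t = t - (\<Sum>u\<in>W - F. pscale (lin_coeff t u) (xvar u))"
      by (simp add: algebra_simps)
    also have "\<dots> \<in> pv.span P"
      using t P outside by (intro pv.span_diff pv.span_sum pv.span_scale) (auto simp: P_def)
    finally show ?thesis .
  qed
  then have "pv.span (restrict_lin F ` set th) \<subseteq> pv.span P"
    by (intro pv.span_minimal pv.subspace_span) auto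
  then have "xvar ` W \<subseteq> pv.span P"
    using xvar_in_span_restrict_lin[OF lsop face \<open>F \<subseteq> W\<close> \<open>finite W\<close>] outside by blast
  moreover have "finite P"
    using \<open>finite R\<close> \<open>finite S\<close> by (simp add: P_def)
  ultimately have "pv.dim (xvar ` W :: ('w, 'k) mpoly set) \<le> pv.dim P"
    using P by (intro pv.dim_le_dim_if_subset_span) auto
  then have "card W \<le> pv.dim P"
    using dim_xvar_image[OF \<open>finite W\<close>, where 'k='k] by simp
  also have "\<dots> \<le> pv.dim (xvar ` S \<union> set th) + card (xvar ` R :: ('w, 'k) mpoly set)"
    unfolding P_def using \<open>finite R\<close> \<open>finite S\<close> by (intro pv.dim_Un_le_dim_add_card) auto
  also have "\<dots> \<le> pv.dim (xvar ` S \<union> set th) + card R"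
    using card_image_le[OF \<open>finite R\<close>, of xvar] by simp
  finally have "card W \<le> pv.dim (xvar ` S \<union> set th) + card R" .
  moreover have "card W = card F + card S + card R"
  proof -
    have "finite F"
      using \<open>F \<subseteq> W\<close> \<open>finite W\<close> by (rule finite_subset)
    then have "card (F \<union> S \<union> R) = card F + card S + card R"
      using \<open>finite R\<close> \<open>finite S\<close> \<open>S \<inter> F = {}\<close>
      by (subst card_Un_disjoint) (auto simp: R_def card_Un_disjoint Int_commute)
    moreover have "F \<union> S \<union> R = W"
      using \<open>F \<subseteq> W\<close> \<open>S \<subseteq> W\<close> by (auto simp: R_def)
    ultimately show ?thesis
      by simp
  qed
  ultimately show ?thesis
    by linarith
qed

section \<open>Homology triangulations\<close>

lemma simplicial_complex_lk:
  assumes "simplicial_complex G"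
  shows "simplicial_complex (lk G E)"
  unfolding simplicial_complex_def
proof (intro conjI ballI allI impI)
  have closed: "B \<in> G" if "A \<in> G" and "B \<subseteq> A" for A B
    using assms that unfolding simplicial_complex_def by blast
  show "finite (lk G E)"
    using assms by (simp add: simplicial_complex_def lk_def)
  fix F assume "F \<in> lk G E"
  then have "F \<in> G" and "F \<inter> E = {}" and "F \<union> E \<in> G"
    by (simp_all add: lk_def)
  then show "finite F"
    using assms by (simp add: simplicial_complex_def)
  fix H assume "H \<subseteq> F"
  then have "H \<in> G" and "H \<inter> E = {}" and "H \<union> E \<in> G"
    using \<open>F \<in> G\<close> \<open>F \<inter> E = {}\<close> \<open>F \<union> E \<in> G\<close> closed[of "F \<union> E" "H \<union> E"] closed[of F H]
    by auto
  then show "H \<in> lk G E"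
    by (simp add: lk_def)
qed

lemma finite_verts:
  assumes "simplicial_complex D"
  shows "finite (verts D)"
proof (rule finite_subset)
  show "verts D \<subseteq> \<Union> D"
    by (auto simp: verts_def)
  show "finite (\<Union> D)"
    using assms by (simp add: simplicial_complex_def)
qed

lemma face_subset_verts:
  assumes "simplicial_complex D" and "F \<in> D"
  shows "F \<subseteq> verts D"
proof
  fix w assume "w \<in> F"
  then have "{w} \<in> D"
    using assms unfolding simplicial_complex_def by blast
  then show "w \<in> verts D"
    by (simp add: verts_def)
qed

interpretation fv: vector_space "fscale :: 'k::field \<Rightarrow> ('a \<Rightarrow> 'k) \<Rightarrow> _"
  by unfold_locales (auto simp: fscale_def fun_eq_iff algebra_simps)

lemma rbetti_nonzero_imp_face:
  fixes K :: "'k::field itself" and D :: "'w::linorder set set"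
  assumes "rbetti K D i \<noteq> 0"
  shows "\<exists>F\<in>D. int (card F) = i + 1"
proof (rule ccontr)
  assume no_face: "\<not> (\<exists>F\<in>D. int (card F) = i + 1)"
  have "{f :: 'w set \<Rightarrow> 'k. f \<in> chains D i \<and> bd D f = 0} \<subseteq> fv.span {}"
  proof
    fix f :: "'w set \<Rightarrow> 'k"
    assume "f \<in> {f. f \<in> chains D i \<and> bd D f = 0}"
    then have "f = 0"
      using no_face by (auto simp: chains_def fun_eq_iff)
    then show "f \<in> fv.span {}"
      by (simp add: fv.span_zero)
  qed
  then have "fv.dim {f :: 'w set \<Rightarrow> 'k. f \<in> chains D i \<and> bd D f = 0} = 0"
    using fv.dim_le_card[of _ "{}"] by simp
  then show False
    using assms by (simp add: rbetti_def)
qed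

lemma hsphere_has_top_face:
  assumes "hsphere K D d"
  shows "\<exists>F\<in>D. int (card F) = d + 1"
proof -
  have "{} \<in> D"
    and spheres: "\<forall>F\<in>D. \<forall>i. rbetti K (lk D F) i = (if i = d - int (card F) then 1 else 0)"
    using assms by (simp_all add: hsphere_def)
  then have "rbetti K D d \<noteq> 0"
    using bspec[OF spheres \<open>{} \<in> D\<close>] by (simp add: lk_def)
  then show ?thesis
    by (rule rbetti_nonzero_imp_face)
qed

lemma htriang_carrier_link:
  assumes "htriang K G \<sigma> V" and "E \<in> G" and "\<sigma> E \<noteq> {}"
  shows "simplicial_complex (restr G \<sigma> (\<sigma> E))"
    and "hsphere K (lk (restr G \<sigma> (\<sigma> E)) E) (int (card (\<sigma> E)) - 1 - int (card E))"
proof -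
  have "\<sigma> E \<subseteq> V"
    using assms(1,2) by (simp add: htriang_def)
  then have "\<exists>B. hball_bd K (restr G \<sigma> (\<sigma> E)) B (int (card (\<sigma> E)) - 1)
      \<and> restr G \<sigma> (\<sigma> E) - B = {F \<in> G. \<sigma> F = \<sigma> E}"
    using assms(1,3) unfolding htriang_def by blast
  then obtain B where ball: "hball_bd K (restr G \<sigma> (\<sigma> E)) B (int (card (\<sigma> E)) - 1)"
    and "restr G \<sigma> (\<sigma> E) - B = {F \<in> G. \<sigma> F = \<sigma> E}"
    by blast
  then have "E \<in> restr G \<sigma> (\<sigma> E) - B"
    using assms(2) by simp
  with ball show "simplicial_complex (restr G \<sigma> (\<sigma> E))"
    and "hsphere K (lk (restr G \<sigma> (\<sigma> E)) E) (int (card (\<sigma> E)) - 1 - int (card E))"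
    by (auto elim: hball_bd.cases)
qed

lemma htriang_exists_noninterior_face:
  assumes "htriang K G \<sigma> V" and "E \<in> G" and "int (card V) - int (card (\<sigma> E)) = 1"
  shows "\<exists>F\<in>lk G E. (\<forall>w\<in>F. \<sigma> ({w} \<union> E) \<noteq> V) \<and> card V - card E \<le> card F + 1"
proof (cases "\<sigma> E = {}")
  case True
  have "simplicial_complex G"
    using assms(1) by (simp add: htriang_def)
  then have "{} \<in> G"
    using assms(2) unfolding simplicial_complex_def by blast
  then have "{} \<in> lk G E"
    using assms(2) by (simp add: lk_def)
  moreover have "card V = 1"
    using assms(3) True by simp
  ultimately show ?thesis
    by (intro bexI[of _ "{}"]) simp_all
next
  case False
  obtain F where F: "F \<in> lk (restr G \<sigma> (\<sigma> E)) E"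
    and card_F: "int (card F) = int (card (\<sigma> E)) - 1 - int (card E) + 1"
    using hsphere_has_top_face[OF htriang_carrier_link(2)[OF assms(1,2) False]] by blast
  have "\<sigma> ({w} \<union> E) \<noteq> V" if "w \<in> F" for w
  proof
    assume "\<sigma> ({w} \<union> E) = V"
    have "F \<union> E \<in> restr G \<sigma> (\<sigma> E)" and "{w} \<union> E \<subseteq> F \<union> E"
      using F \<open>w \<in> F\<close> by (auto simp: lk_def)
    then have "{w} \<union> E \<in> restr G \<sigma> (\<sigma> E)"
      using htriang_carrier_link(1)[OF assms(1,2) False] unfolding simplicial_complex_def by blast
    then have "V \<subseteq> \<sigma> E"
      using \<open>\<sigma> ({w} \<union> E) = V\<close> by (simp add: restr_def)
    moreover have "finite (\<sigma> E)"
      using assms(1,2) finite_subset by (auto simp: htriang_def)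
    ultimately have "card V \<le> card (\<sigma> E)"
      by (rule card_mono[rotated])
    then show False
      using assms(3) by simp
  qed
  moreover have "F \<in> lk G E"
    using F by (auto simp: lk_def restr_def)
  moreover have "card V - card E \<le> card F + 1"
    using card_F assms(3) by linarith
  ultimately show ?thesis
    by blast
qed

section \<open>Degree-one parts of the local face module\<close>

lemma zero_in_ideal_gen: "0 \<in> ideal_gen R X"
  unfolding ideal_gen_def by (rule CollectI, rule exI[of _ "\<lambda>_. 0"], rule exI[of _ "{}"]) simp

lemma in_ideal_gen: "1 \<in> R \<Longrightarrow> x \<in> X \<Longrightarrow> x \<in> ideal_gen R X"
  unfolding ideal_gen_def by (rule CollectI, rule exI[of _ "\<lambda>_. 1"], rule exI[of _ "{x}"]) simp

lemma zero_in_SR: "0 \<in> SR D W"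
  by (simp add: SR_def)

lemma in_setsumI1: "a \<in> A \<Longrightarrow> 0 \<in> B \<Longrightarrow> a \<in> setsum A B"
  unfolding setsum_def by (rule CollectI, rule exI[of _ a], rule exI[of _ 0]) simp

lemma in_setsumI2: "0 \<in> A \<Longrightarrow> b \<in> B \<Longrightarrow> b \<in> setsum A B"
  unfolding setsum_def by (rule CollectI, rule exI[of _ 0], rule exI[of _ b]) simp

lemma setsum_subset_polyring:
  "A \<subseteq> polyring W \<Longrightarrow> B \<subseteq> polyring W \<Longrightarrow> setsum A B \<subseteq> polyring W"
  by (auto simp: setsum_def intro: polyring_add)

lemma ideal_gen_subset_polyring:
  assumes "X \<subseteq> polyring W"
  shows "ideal_gen (polyring W) X \<subseteq> polyring W"
proof
  fix p assume "p \<in> ideal_gen (polyring W) X"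
  then obtain c F where "p = (\<Sum>x\<in>F. c x * x)" and "finite F" and "F \<subseteq> X"
    and "\<forall>x\<in>F. c x \<in> polyring W"
    unfolding ideal_gen_def by blast
  then show "p \<in> polyring W"
    using assms by (auto intro!: polyring_sum polyring_mult)
qed

lemma ideal_gen_mindeg_ge:
  assumes "\<And>x. x \<in> X \<Longrightarrow> mindeg_ge k x" and "p \<in> ideal_gen R X"
  shows "mindeg_ge k p"
proof -
  obtain c F where "p = (\<Sum>x\<in>F. c x * x)" and "finite F" and "F \<subseteq> X"
    and "\<forall>x\<in>F. c x \<in> R"
    using assms(2) unfolding ideal_gen_def by blast
  moreover have "mindeg_ge k (c x * x)" if "x \<in> X" for x
    using mindeg_ge_mult[OF mindeg_ge_0 assms(1)[OF that]] by simp
  ultimately show ?thesis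
    by (auto intro!: mindeg_ge_sum)
qed

lemma homog_part_ideal_gen_in_span:
  assumes "\<And>x. x \<in> X \<Longrightarrow> homog n x" and "p \<in> ideal_gen R X"
  shows "homog_part n p \<in> pv.span X"
proof -
  obtain c F where "p = (\<Sum>x\<in>F. c x * x)" and "finite F" and "F \<subseteq> X"
    and "\<forall>x\<in>F. c x \<in> R"
    using assms(2) unfolding ideal_gen_def by blast
  then have "homog_part n p = (\<Sum>x\<in>F. pscale (Poly_Mapping.lookup (c x) 0) x)"
    using assms(1) by (auto simp: homog_part_sum homog_part_mult_homog intro!: sum.cong)
  also have "\<dots> \<in> pv.span X"
    using \<open>F \<subseteq> X\<close> by (intro pv.span_sum pv.span_scale pv.span_base) auto
  finally show ?thesis .
qed

lemma SR_mindeg_ge: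
  assumes "\<And>H. finite H \<Longrightarrow> H \<subseteq> W \<Longrightarrow> card H < k \<Longrightarrow> H \<in> D" and "s \<in> SR D W"
  shows "mindeg_ge k s"
  unfolding mindeg_ge_def
proof
  fix m assume "m \<in> Poly_Mapping.keys s"
  then have "Poly_Mapping.keys m \<subseteq> W" and "Poly_Mapping.keys m \<notin> D"
    using assms(2) by (auto simp: SR_def polyring_def)
  then have "k \<le> card (Poly_Mapping.keys m)"
    using assms(1)[OF finite_keys] not_le by blast
  then show "k \<le> monom_deg m"
    using card_keys_le_monom_deg order.trans by blast
qed

lemma SR_mindeg_ge_2:
  assumes "{} \<in> L" and "\<And>w. w \<in> W \<Longrightarrow> {w} \<in> L" and "s \<in> SR L W"
  shows "mindeg_ge 2 s"
proof (rule SR_mindeg_ge[OF _ assms(3)])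
  fix H assume "finite H" and "H \<subseteq> W" and "card H < 2"
  then consider "card H = 0" | "card H = 1"
    by linarith
  then show "H \<in> L"
  proof cases
    case 1
    then show ?thesis
      using \<open>finite H\<close> assms(1) by simp
  next
    case 2
    then obtain w where "H = {w}"
      by (rule card_1_singletonE)
    then show ?thesis
      using \<open>H \<subseteq> W\<close> assms(2) by simp
  qed
qed

lemma ideal_prod_SR_mindeg_ge_2:
  assumes "{} \<in> D" and "\<And>x. x \<in> X \<Longrightarrow> mindeg_ge 1 x"
    and "q \<in> ideal_prod R (SR D W) (ideal_gen R' X)"
  shows "mindeg_ge 2 q"
proof -
  have "mindeg_ge 2 y" if y: "y \<in> {a * b | a b. a \<in> SR D W \<and> b \<in> ideal_gen R' X}" for y
  proof -
    obtain a b where "y = a * b" and "a \<in> SR D W" and "b \<in> ideal_gen R' X"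
      using y by blast
    moreover have "mindeg_ge 1 a"
      using assms(1) \<open>a \<in> SR D W\<close> by (intro SR_mindeg_ge) auto
    moreover have "mindeg_ge 1 b"
      using assms(2) \<open>b \<in> ideal_gen R' X\<close> by (rule ideal_gen_mindeg_ge)
    ultimately show ?thesis
      using mindeg_ge_mult[of 1 a 1 b] by (simp add: numeral_2_eq_2)
  qed
  then show ?thesis
    using assms(3) unfolding ideal_prod_def by (rule ideal_gen_mindeg_ge)
qed

lemma card_add_card_face_le_dim_deg1:
  fixes th :: "('w, 'k::field) mpoly list"
  assumes L: "simplicial_complex L" and lsop: "is_lsop (verts L) (SR L (verts L)) th d"
    and "F \<in> L" and "S \<subseteq> verts L" and "S \<inter> F = {}"
    and X: "X \<subseteq> polyring (verts L)" and "xvar ` S \<subseteq> X"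
  shows "card S + card F \<le> pdim (degpart (setsum (ideal_gen (polyring (verts L)) X)
            (setsum (SR L (verts L)) (ideal_gen (polyring (verts L)) (set th)))) 1)"
    (is "_ \<le> pdim (degpart ?M 1)")
proof -
  let ?R = "polyring (verts L)"
  have th: "t \<in> ?R" "homog 1 t" if "t \<in> set th" for t
    using is_lsop_homog1[OF lsop that] by auto
  have "card S + card F \<le> pv.dim (xvar ` S \<union> set th)"
    using L \<open>F \<in> L\<close> unfolding simplicial_complex_def
    by (intro card_add_card_face_le_dim[OF lsop _ face_subset_verts[OF L \<open>F \<in> L\<close>]
          finite_verts[OF L] \<open>S \<subseteq> verts L\<close> \<open>S \<inter> F = {}\<close>]) blast
  also have "\<dots> \<le> pv.dim (degpart ?M 1)"
  proof (rule pv.dim_le_dim_if_subset_span)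
    have "0 \<in> setsum (SR L (verts L)) (ideal_gen ?R (set th))"
      by (rule in_setsumI1[OF zero_in_SR zero_in_ideal_gen])
    then have "xvar v \<in> degpart ?M 1" if "v \<in> S" for v
      using that \<open>xvar ` S \<subseteq> X\<close> homog_xvar[of v]
      by (auto simp: degpart_def intro!: in_setsumI1 in_ideal_gen)
    moreover have "t \<in> degpart ?M 1" if "t \<in> set th" for t
      using th(2)[OF that] in_ideal_gen[OF polyring_one that]
      by (simp add: degpart_def in_setsumI2 zero_in_ideal_gen zero_in_SR)
    ultimately show "xvar ` S \<union> set th \<subseteq> pv.span (degpart ?M 1)"
      using pv.span_superset by blast
    have "?M \<subseteq> ?R"
      using X th by (intro setsum_subset_polyring ideal_gen_subset_polyring) (auto simp: SR_def)
    then show "degpart ?M 1 \<subseteq> pv.span (xvar ` verts L)"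
      using homog1_in_span_xvar[OF finite_verts[OF L]] by (auto simp: degpart_def)
  qed (simp add: finite_verts[OF L])
  finally show ?thesis
    by (simp add: pdim_def)
qed

lemma degpart1_restriction_subset_span:
  fixes th :: "('w, 'k::field) mpoly list"
  assumes "{} \<in> D" and "{} \<in> L" and "\<And>w. w \<in> W \<Longrightarrow> {w} \<in> L"
    and "\<And>x. x \<in> X \<Longrightarrow> mindeg_ge 1 x" and "\<And>t. t \<in> set th \<Longrightarrow> homog 1 t"
  shows "degpart (setsum (ideal_prod (polyring W) (SR D W) (ideal_gen (polyring W) X))
           (setsum (SR L W) (ideal_gen (polyring W) (set th)))) 1 \<subseteq> pv.span (set th)"
proof
  fix p
  assume "p \<in> degpart (setsum (ideal_prod (polyring W) (SR D W) (ideal_gen (polyring W) X))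
           (setsum (SR L W) (ideal_gen (polyring W) (set th)))) 1"
  then obtain q s c where "homog 1 p" and "p = q + (s + c)"
    and q: "q \<in> ideal_prod (polyring W) (SR D W) (ideal_gen (polyring W) X)"
    and s: "s \<in> SR L W" and c: "c \<in> ideal_gen (polyring W) (set th)"
    unfolding degpart_def setsum_def by blast
  have "homog_part 1 q = 0" and "homog_part 1 s = 0"
    using ideal_prod_SR_mindeg_ge_2[OF assms(1,4) q] SR_mindeg_ge_2[OF assms(2,3) s]
    by (simp_all add: homog_part_eq_0 numeral_2_eq_2)
  then have "p = homog_part 1 c"
    using homog_part_eq_self[OF \<open>homog 1 p\<close>] \<open>p = q + (s + c)\<close> by (simp add: homog_part_add)
  then show "p \<in> pv.span (set th)"
    using homog_part_ideal_gen_in_span[OF assms(5) c] by simp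
qed

lemma card_interior_add_card_le_pdim_lfm:
  fixes G :: "'w set set" and th :: "('w, 'k::field) mpoly list"
  assumes "simplicial_complex G" and "lsop_lk G V E th" and "D \<subseteq> lk G E"
    and "F \<in> lk G E" and "\<forall>w\<in>F. \<sigma> ({w} \<union> E) \<noteq> V"
  shows "card {v. {v} \<in> D \<and> \<sigma> ({v} \<union> E) = V} + card F
    \<le> pdim (degpart (setsum (lfm_J G \<sigma> V E) (lfm_N G E th)) 1)"
proof -
  let ?S = "{v. {v} \<in> D \<and> \<sigma> ({v} \<union> E) = V}"
    and ?X = "{xmon F | F. F \<in> lk G E \<and> \<sigma> (F \<union> E) = V}"
  have L: "simplicial_complex (lk G E)"
    using assms(1) by (rule simplicial_complex_lk)
  have lsop: "is_lsop (verts (lk G E)) (SR (lk G E) (verts (lk G E))) th (card V - card E)"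
    using assms(2) by (simp add: lsop_lk_def)
  have S: "?S \<subseteq> verts (lk G E)" "?S \<inter> F = {}" "xvar ` ?S \<subseteq> ?X"
    using assms(3,5) by (auto simp: verts_def simp flip: xmon_singleton)
  have "?X \<subseteq> polyring (verts (lk G E))"
    using face_subset_verts[OF L] by (auto intro: xmon_in_polyring)
  then show ?thesis
    unfolding lfm_J_def lfm_N_def by (rule card_add_card_face_le_dim_deg1[OF L lsop assms(4) S(1,2) _ S(3)])
qed

lemma pdim_lfm_restriction_le:
  fixes G :: "'w set set" and th :: "('w, 'k::field) mpoly list"
  assumes "simplicial_complex G" and "E \<in> G" and "\<sigma> E \<noteq> V" and "lsop_lk G V E th"
    and "{} \<in> D"
  shows "pdim (degpart (setsum (ideal_prod (polyring (verts (lk G E))) (SR D (verts (lk G E)))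
      (lfm_J G \<sigma> V E)) (lfm_N G E th)) 1) \<le> card V - card E"
proof -
  let ?X = "{xmon F | F. F \<in> lk G E \<and> \<sigma> (F \<union> E) = V}"
  have lsop: "is_lsop (verts (lk G E)) (SR (lk G E) (verts (lk G E))) th (card V - card E)"
    using assms(4) by (simp add: lsop_lk_def)
  have "{} \<in> G"
    using assms(1,2) unfolding simplicial_complex_def by blast
  then have "{} \<in> lk G E"
    using assms(2) by (simp add: lk_def)
  moreover have "mindeg_ge 1 x" if "x \<in> ?X" for x
  proof -
    obtain F where "x = xmon F" and "F \<in> lk G E" and "\<sigma> (F \<union> E) = V"
      using \<open>x \<in> ?X\<close> by blast
    moreover have "F \<noteq> {}" and "finite F"
      using calculation assms(3) simplicial_complex_lk[OF assms(1)]
      by (auto simp: simplicial_complex_def)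
    ultimately show ?thesis
      using mindeg_ge_mono[OF homog_imp_mindeg_ge[OF homog_xmon[OF \<open>finite F\<close>]], of 1]
      by (simp add: Suc_le_eq card_gt_0_iff)
  qed
  ultimately have "degpart (setsum (ideal_prod (polyring (verts (lk G E))) (SR D (verts (lk G E)))
      (lfm_J G \<sigma> V E)) (lfm_N G E th)) 1 \<subseteq> pv.span (set th)"
    unfolding lfm_J_def lfm_N_def
    by (intro degpart1_restriction_subset_span[OF assms(5)] is_lsop_homog1(2)[OF lsop])
      (simp_all add: verts_def)
  then have "pdim (degpart (setsum (ideal_prod (polyring (verts (lk G E))) (SR D (verts (lk G E)))
      (lfm_J G \<sigma> V E)) (lfm_N G E th)) 1) \<le> card (set th)"
    unfolding pdim_def by (rule pv.dim_le_card) simp_all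
  also have "\<dots> \<le> card V - card E"
    using card_length[of th] lsop by (simp add: is_lsop_def)
  finally show ?thesis .
qed

theorem lemma5p6:
  fixes G :: "'w::linorder set set" and \<sigma> :: "'w set \<Rightarrow> 'v set" and V :: "'v set"
    and E :: "'w set" and th :: "('w, 'k::field) mpoly list" and D :: "'w set set"
  assumes "infinite (UNIV :: 'k set)"
    and "htriang TYPE('k) G \<sigma> V"
    and "quasi_geometric G \<sigma> V"
    and "E \<in> G"
    and "int (card V) - int (card (\<sigma> E)) = 1"
    and "lsop_lk G V E th"
    and "special \<sigma> V E th"
    and "simplicial_complex D" and "D \<subseteq> lk G E"
  shows "int (loc_restr_dim1 G \<sigma> V E th D)
           \<ge> int (card {v. {v} \<in> D \<and> \<sigma> ({v} \<union> E) = V}) - 1"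
proof (cases "D = {}")
  case True
  then show ?thesis
    by simp
next
  case False
  then have "{} \<in> D"
    using assms(8) unfolding simplicial_complex_def by blast
  have G: "simplicial_complex G"
    using assms(2) by (simp add: htriang_def)
  obtain F where "F \<in> lk G E" and "\<forall>w\<in>F. \<sigma> ({w} \<union> E) \<noteq> V" and "card V - card E \<le> card F + 1"
    using htriang_exists_noninterior_face[OF assms(2,4,5)] by blast
  moreover have "\<sigma> E \<noteq> V"
    using assms(5) by auto
  ultimately show ?thesis
    using card_interior_add_card_le_pdim_lfm[OF G assms(6,9), of F \<sigma>]
      pdim_lfm_restriction_le[OF G assms(4) _ assms(6) \<open>{} \<in> D\<close>]
    unfolding loc_restr_dim1_def by fastforce
qed

end
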